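(* Let $H$ be Higman's group, $H=\langle a_i\ (i\in\mathbb Z/4\mathbb Z)\mid a_i a_{i+1} a_i^{-1}=a_{i+1}^2 \text{ for all } i\in \mathbb Z/4\mathbb Z\rangle$. Every homomorphism $\rho:H\to \mathsf{Diff}^1(\mathbb R)$ is trivial.
   Context: $\mathsf{Diff}^1(\mathbb R)$ denotes the group of $C^1$-diffeomorphisms of the real line. *)

theory Defs
  imports "HOL-Analysis.Analysis"
begin

definition C1_real :: "(real \<Rightarrow> real) \<Rightarrow> bool" where
  "C1_real f \<longleftrightarrow> (\<exists>f'. (\<forall>x. (f has_real_derivative f' x) (at x)) \<and> continuous_on UNIV f')"

text \<open>Elements of Diff^1(R): bijections of R which are C1 with C1 inverse.
  The group law of Diff^1(R) is composition, the identity is id, inverses are inv.\<close>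
definition C1_diffeo :: "(real \<Rightarrow> real) \<Rightarrow> bool" where
  "C1_diffeo f \<longleftrightarrow> bij f \<and> C1_real f \<and> C1_real (inv f)"

text \<open>By the universal
  property of group presentations, homomorphisms H -> Diff^1(R) correspond exactly
  to such 4-tuples.\<close>
definition higman_rep :: "(nat \<Rightarrow> real \<Rightarrow> real) \<Rightarrow> bool" where
  "higman_rep a \<longleftrightarrow>
     (\<forall>i<4. C1_diffeo (a i)) \<and>
     (\<forall>i<4. a i \<circ> a ((i + 1) mod 4) \<circ> inv (a i) = a ((i + 1) mod 4) \<circ> a ((i + 1) mod 4))"

end

theory Submission
  imports Defs
begin

(* Each a_i preserves orientation, being conjugate to its own square.
   Conjugating an increasing homeomorphism b to its square b^2 forces the conjugator a to
   expand near both ends of any interval on which b has no fixed point.  Apply this to the cyclic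
   Higman relations a_i a_(i+1) a_i^-1 = a_(i+1)^2 inside a component I of the complement of the
   common fixed points: a greatest fixed point of a_(i+1) in I would yield a strictly greater one
   of a_i, and going once around the cycle gives a contradiction.  So the fixed points of every a_i
   accumulate at both ends of I.
   C^1 regularity rules out a fixed point x of a_i in I that a_(i+1) moves.  The largest fixed
   point p of a_(i+1) below x is fixed by a_i, and also by a_(i-1): otherwise the
   a_(i-1)-preimages of a point just right of p converge to a common fixed point q of a_(i-1)
   and a_i, while the ratio of their a_i-displacement to their distance from q grows
   geometrically, which the mean value theorem forbids.  One more such step shows that p is a
   common fixed point, contradicting the choice of I.  Hence there is no such I. *)

section \<open>Increasing homeomorphisms of the line\<close>

definition incr_homeo :: "(real \<Rightarrow> real) \<Rightarrow> bool" where
  "incr_homeo f \<longleftrightarrow> bij f \<and> strict_mono f \<and> continuous_on UNIV f \<and> continuous_on UNIV (inv f)"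

text \<open>\<open>conj_to_square a b\<close> is the Higman relation \<open>a b a\<^sup>-\<^sup>1 = b\<^sup>2\<close>, written without inverses.\<close>
definition conj_to_square :: "(real \<Rightarrow> real) \<Rightarrow> (real \<Rightarrow> real) \<Rightarrow> bool" where
  "conj_to_square a b \<longleftrightarrow> (\<forall>x. a (b x) = b (b (a x)))"

definition invariant :: "(real \<Rightarrow> real) \<Rightarrow> real set \<Rightarrow> bool" where
  "invariant f S \<longleftrightarrow> (\<forall>x. f x \<in> S \<longleftrightarrow> x \<in> S)"

definition reflect :: "(real \<Rightarrow> real) \<Rightarrow> real \<Rightarrow> real" where
  "reflect f x = - f (- x)"

lemma incr_homeo_inv_f [simp]: "incr_homeo f \<Longrightarrow> inv f (f x) = x"
  unfolding incr_homeo_def by (meson bij_is_inj inv_f_f)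

lemma incr_homeo_f_inv [simp]: "incr_homeo f \<Longrightarrow> f (inv f x) = x"
  unfolding incr_homeo_def by (meson bij_is_surj surj_f_inv_f)

lemma incr_homeo_less_iff [simp]: "incr_homeo f \<Longrightarrow> f x < f y \<longleftrightarrow> x < y"
  unfolding incr_homeo_def by (simp add: strict_mono_less)

lemma incr_homeo_le_iff [simp]: "incr_homeo f \<Longrightarrow> f x \<le> f y \<longleftrightarrow> x \<le> y"
  unfolding incr_homeo_def by (simp add: strict_mono_less_eq)

lemma incr_homeo_eq_iff [simp]: "incr_homeo f \<Longrightarrow> f x = f y \<longleftrightarrow> x = y"
  by (metis incr_homeo_inv_f)

lemma incr_homeo_continuous_on: "incr_homeo f \<Longrightarrow> continuous_on S f"
  unfolding incr_homeo_def using continuous_on_subset by blast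

lemma incr_homeo_isCont: "incr_homeo f \<Longrightarrow> isCont f x"
  unfolding incr_homeo_def by (simp add: continuous_on_eq_continuous_at)

lemma incr_homeo_inv: 
  assumes "incr_homeo f" shows "incr_homeo (inv f)"
proof -
  have "inv f x < inv f y" if "x < y" for x y
    using incr_homeo_less_iff[OF assms, of "inv f x" "inv f y"] assms that by simp
  then have "strict_mono (inv f)"
    by (rule strict_monoI)
  moreover have "bij (inv f)" "inv (inv f) = f"
    using assms unfolding incr_homeo_def by (simp_all add: bij_imp_bij_inv inv_inv_eq)
  ultimately show ?thesis
    using assms unfolding incr_homeo_def by simp
qed

lemma incr_homeo_funpow_less_iff [simp]: "incr_homeo f \<Longrightarrow> (f ^^ n) x < (f ^^ n) y \<longleftrightarrow> x < y"
  by (induction n) auto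

lemma incr_homeo_funpow_le_iff [simp]: "incr_homeo f \<Longrightarrow> (f ^^ n) x \<le> (f ^^ n) y \<longleftrightarrow> x \<le> y"
  by (induction n) auto

lemma incr_homeo_reflect:
  assumes "incr_homeo f" shows "incr_homeo (reflect f)"
proof -
  have inv: "reflect f \<circ> reflect (inv f) = id" "reflect (inv f) \<circ> reflect f = id"
    using assms by (simp_all add: reflect_def fun_eq_iff)
  then have "bij (reflect f)" and "inv (reflect f) = reflect (inv f)"
    by (auto intro: o_bij inv_unique_comp)
  moreover have "strict_mono (reflect f)"
    using assms by (simp add: strict_mono_def reflect_def)
  moreover have "continuous_on UNIV (reflect g)" if "continuous_on UNIV g" for g
    unfolding reflect_def
    by (intro continuous_intros continuous_on_compose2[OF that]) auto
  ultimately show ?thesis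
    using assms unfolding incr_homeo_def by auto
qed

lemma invariant_funpow: "invariant f S \<Longrightarrow> (f ^^ n) x \<in> S \<longleftrightarrow> x \<in> S"
  by (induction n) (auto simp: invariant_def)

lemma invariant_inv: "incr_homeo f \<Longrightarrow> invariant f S \<Longrightarrow> invariant (inv f) S"
  unfolding invariant_def by (metis incr_homeo_f_inv)

lemma invariant_Int: "invariant f S \<Longrightarrow> invariant f T \<Longrightarrow> invariant f (S \<inter> T)"
  unfolding invariant_def by blast

lemma invariant_greaterThan: "incr_homeo f \<Longrightarrow> f s = s \<Longrightarrow> invariant f {s<..}"
  unfolding invariant_def by (metis greaterThan_iff incr_homeo_less_iff)

lemma invariant_atMost: "incr_homeo f \<Longrightarrow> f s = s \<Longrightarrow> invariant f {..s}"
  unfolding invariant_def by (metis atMost_iff incr_homeo_le_iff)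

lemma invariant_own_fixed_points: "incr_homeo f \<Longrightarrow> invariant f {x. f x = x}"
  unfolding invariant_def by simp

lemma invariant_reflect: "invariant f S \<Longrightarrow> invariant (reflect f) (uminus ` S)"
  unfolding invariant_def reflect_def by (metis (no_types, lifting) image_iff minus_minus)

lemma invariant_fixes_greatest:
  assumes "incr_homeo f" "invariant f S" "s \<in> S" "\<forall>x\<in>S. x \<le> s"
  shows "f s = s"
proof -
  have "f s \<in> S" "inv f s \<in> S"
    using assms invariant_inv[OF assms(1,2)] unfolding invariant_def by blast+
  then have "f s \<le> s" "inv f s \<le> s"
    using assms(4) by blast+
  then have "s \<le> f s"
    using incr_homeo_le_iff[OF assms(1), of "inv f s" s] assms(1) by simp
  with \<open>f s \<le> s\<close> show ?thesis by simp
qed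

lemma conj_to_square_funpow: "conj_to_square a b \<Longrightarrow> a ((b ^^ n) x) = (b ^^ (2 * n)) (a x)"
  by (induction n) (simp_all add: conj_to_square_def)

lemma conj_to_square_inv:
  assumes "incr_homeo b" "conj_to_square a b" shows "conj_to_square a (inv b)"
  unfolding conj_to_square_def
proof
  fix x
  have "a x = b (b (a (inv b x)))"
    using assms by (metis conj_to_square_def incr_homeo_f_inv)
  then show "a (inv b x) = inv b (inv b (a x))"
    using assms(1) by simp
qed

lemma incr_homeo_square_fixed: "incr_homeo f \<Longrightarrow> f (f x) = x \<Longrightarrow> f x = x"
  by (metis incr_homeo_less_iff not_less_iff_gr_or_eq)

lemma invariant_fixed_points:
  assumes "incr_homeo a" "incr_homeo b" "conj_to_square a b"
  shows "invariant a {x. b x = x}"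
proof -
  have "b (a x) = a x \<longleftrightarrow> b x = x" for x
  proof
    assume "b (a x) = a x"
    then have "a (b x) = a x" using assms(3) by (simp add: conj_to_square_def)
    then show "b x = x" using assms(1) by simp
  next
    assume "b x = x"
    then have "b (b (a x)) = a x" using assms(3) by (metis conj_to_square_def)
    then show "b (a x) = a x" using assms(2) incr_homeo_square_fixed by blast
  qed
  then show ?thesis unfolding invariant_def by simp
qed

lemma conj_to_square_reflect: "conj_to_square a b \<Longrightarrow> conj_to_square (reflect a) (reflect b)"
  by (simp add: conj_to_square_def reflect_def)

section \<open>Orbits in an interval without fixed points\<close>

definition greatest_fixed_point :: "(real \<Rightarrow> real) \<Rightarrow> real set \<Rightarrow> real \<Rightarrow> bool" where
  "greatest_fixed_point g I s \<longleftrightarrow> s \<in> I \<and> g s = s \<and> (\<forall>x\<in>I. g x = x \<longrightarrow> x \<le> s)"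

lemma continuous_nonzero_sign:
  fixes h :: "real \<Rightarrow> real"
  assumes "continuous_on S h" "connected S" "\<forall>x\<in>S. h x \<noteq> 0"
  shows "(\<forall>x\<in>S. 0 < h x) \<or> (\<forall>x\<in>S. h x < 0)"
proof (rule ccontr)
  assume "\<not> ?thesis"
  then obtain x y where "x \<in> S" "y \<in> S" "h x < 0" "0 < h y"
    using assms(3) by (meson linorder_neqE_linordered_idom)
  moreover have "connected (h ` S)"
    using assms(1,2) by (rule connected_continuous_image)
  ultimately have "0 \<in> h ` S"
    unfolding connected_iff_interval by (meson imageI less_imp_le)
  then show False using assms(3) by auto
qed

lemma fixed_point_free_up_or_down:
  fixes g :: "real \<Rightarrow> real"
  assumes "continuous_on J g" "is_interval J" "\<forall>x\<in>J. g x \<noteq> x"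
  shows "(\<forall>x\<in>J. x < g x) \<or> (\<forall>x\<in>J. g x < x)"
proof -
  have "continuous_on J (\<lambda>x. g x - x)"
    using assms(1) by (intro continuous_intros)
  then show ?thesis
    using continuous_nonzero_sign[of J "\<lambda>x. g x - x"] assms(2,3)
    by (auto simp: is_interval_connected_1)
qed

lemma closed_fixed_points:
  fixes g :: "real \<Rightarrow> real"
  assumes "continuous_on UNIV g" shows "closed {x. g x = x}"
  using closed_Collect_eq[OF assms continuous_on_id] by simp

lemma greatest_fixed_point_exists:
  fixes g :: "real \<Rightarrow> real"
  assumes "continuous_on UNIV g" "is_interval I" "u \<in> I" "g u = u" "x \<in> I"
    and bounded: "\<forall>y\<in>I. g y = y \<longrightarrow> y \<le> x"
  shows "\<exists>s. greatest_fixed_point g I s \<and> u \<le> s"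
proof -
  define S where "S = {y. g y = y} \<inter> {u..x}"
  have "u \<in> S"
    using assms(3,4) bounded by (simp add: S_def)
  moreover have "closed S"
    unfolding S_def using closed_fixed_points[OF assms(1)] by (intro closed_Int) auto
  moreover have "bdd_above S"
    by (rule bdd_aboveI[of _ x]) (simp add: S_def)
  ultimately have "Sup S \<in> S" and upper: "\<And>y. y \<in> S \<Longrightarrow> y \<le> Sup S"
    by (auto intro: closed_contains_Sup cSup_upper)
  then have "u \<le> Sup S" "Sup S \<le> x" "g (Sup S) = Sup S"
    by (simp_all add: S_def)
  moreover have "Sup S \<in> I"
    using calculation(1,2) assms(2,3,5) unfolding is_interval_1 by blast
  moreover have "y \<le> Sup S" if "y \<in> I" "g y = y" for y
  proof (cases "u \<le> y")
    case True
    then show ?thesis using upper[of y] that bounded by (simp add: S_def)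
  next
    case False
    then show ?thesis using \<open>u \<le> Sup S\<close> by simp
  qed
  ultimately show ?thesis
    unfolding greatest_fixed_point_def by blast
qed

lemma orbit_strict_mono:
  assumes "invariant b J" "\<forall>x\<in>J. x < b x" "x \<in> J"
  shows "strict_mono (\<lambda>n. (b ^^ n) x)"
  by (rule strict_monoI_Suc) (use assms invariant_funpow in auto)

lemma orbit_exceeds:
  assumes "incr_homeo b" "is_interval J" "invariant b J" "\<forall>x\<in>J. x < b x" "x \<in> J" "y \<in> J"
  shows "\<exists>n. y < (b ^^ n) x"
proof (rule ccontr)
  assume "\<nexists>n. y < (b ^^ n) x"
  then have bounded: "(b ^^ n) x \<le> y" for n
    by (simp add: not_less)
  have "incseq (\<lambda>n. (b ^^ n) x)"
    using strict_mono_mono[OF orbit_strict_mono[OF assms(3-5)]] .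
  then obtain L where L: "(\<lambda>n. (b ^^ n) x) \<longlonglongrightarrow> L" "\<And>n. (b ^^ n) x \<le> L"
    using bounded incseq_convergent by metis
  have "x \<le> L" "L \<le> y"
    using L(2)[of 0] LIMSEQ_le_const2[OF L(1)] bounded by auto
  then have "L \<in> J"
    using assms(2,5,6) unfolding is_interval_1 by blast
  have "(\<lambda>n. b ((b ^^ n) x)) \<longlonglongrightarrow> b L"
    using L(1) incr_homeo_isCont[OF assms(1)] isCont_tendsto_compose by blast
  moreover have "(\<lambda>n. b ((b ^^ n) x)) \<longlonglongrightarrow> L"
    using LIMSEQ_Suc[OF L(1)] by simp
  ultimately have "b L = L"
    using LIMSEQ_unique by blast
  then show False
    using assms(4) \<open>L \<in> J\<close> by force
qed

lemma orbit_bracket: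
  assumes "incr_homeo b" "is_interval J" "invariant b J" "\<forall>x\<in>J. x < b x" "x0 \<in> J" "x \<in> J"
    and "x0 \<le> x"
  shows "\<exists>n. (b ^^ n) x0 \<le> x \<and> x < (b ^^ Suc n) x0"
proof -
  obtain N where "x < (b ^^ N) x0"
    using orbit_exceeds[OF assms(1-6)] by blast
  then show ?thesis
    using ex_least_nat_less[of "\<lambda>n. x < (b ^^ n) x0" N] assms(7) by (auto simp: not_less)
qed

lemma orbit_convergent_between_fixed_points:
  assumes g: "incr_homeo g" and "g l = l" "g u = u" "l \<le> x" "x \<le> u"
  shows "convergent (\<lambda>n. (g ^^ n) x)"
proof (rule Bseq_monoseq_convergent)
  have "(g ^^ n) l = l" "(g ^^ n) u = u" for n
    using \<open>g l = l\<close> \<open>g u = u\<close> by (induction n) auto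
  then have "l \<le> (g ^^ n) x" "(g ^^ n) x \<le> u" for n
    using incr_homeo_funpow_le_iff[OF g, of n] \<open>l \<le> x\<close> \<open>x \<le> u\<close> by metis+
  then have "norm ((g ^^ n) x) \<le> \<bar>l\<bar> + \<bar>u\<bar>" for n
    using \<open>l \<le> (g ^^ n) x\<close> \<open>(g ^^ n) x \<le> u\<close> unfolding real_norm_def by arith
  then show "Bseq (\<lambda>n. (g ^^ n) x)"
    by (rule BseqI')
  have "(g ^^ n) x \<le> (g ^^ Suc n) x \<longleftrightarrow> x \<le> g x" for n
    using incr_homeo_funpow_le_iff[OF g, of n x "g x"] by (simp add: funpow_swap1)
  then show "monoseq (\<lambda>n. (g ^^ n) x)"
    unfolding monoseq_Suc by (metis linear)
qed

text \<open>If \<open>b\<close> pushes \<open>J\<close> upwards, the \<open>b\<close>-orbit of \<open>a x\<^sub>0\<close> passes \<open>x\<^sub>0\<close> after some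
  \<open>K\<close> steps; for \<open>x\<close> in \<open>[b\<^sup>n x\<^sub>0, b\<^sup>n\<^sup>+\<^sup>1 x\<^sub>0)\<close> with \<open>n > K\<close> the relation
  \<open>a b\<^sup>n = b\<^sup>2\<^sup>n a\<close> then gives \<open>a x \<ge> b\<^sup>n\<^sup>+\<^sup>1 (b\<^sup>n\<^sup>-\<^sup>1 (a x\<^sub>0)) > b\<^sup>n\<^sup>+\<^sup>1 x\<^sub>0 > x\<close>.\<close>
lemma conj_to_square_above_of_up:
  assumes a: "incr_homeo a" and b: "incr_homeo b" and conj: "conj_to_square a b"
    and J: "is_interval J" "invariant a J" "invariant b J"
    and up: "\<forall>x\<in>J. x < b x" and "x0 \<in> J"
  shows "\<exists>z\<in>J. \<forall>x\<in>J. z \<le> x \<longrightarrow> x < a x"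
proof -
  have "a x0 \<in> J"
    using J(2) \<open>x0 \<in> J\<close> by (simp add: invariant_def)
  then obtain K where K: "x0 < (b ^^ K) (a x0)"
    using orbit_exceeds[OF b J(1,3) up] \<open>x0 \<in> J\<close> by blast
  have mono_x0: "strict_mono (\<lambda>n. (b ^^ n) x0)" and mono_ax0: "strict_mono (\<lambda>n. (b ^^ n) (a x0))"
    using orbit_strict_mono[OF J(3) up] \<open>x0 \<in> J\<close> \<open>a x0 \<in> J\<close> by blast+
  have "\<forall>x\<in>J. (b ^^ Suc K) x0 \<le> x \<longrightarrow> x < a x"
  proof (intro ballI impI)
    fix x assume "x \<in> J" "(b ^^ Suc K) x0 \<le> x"
    moreover have "x0 \<le> (b ^^ Suc K) x0"
      using strict_mono_leD[OF mono_x0, of 0 "Suc K"] by simp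
    ultimately obtain n where n: "(b ^^ n) x0 \<le> x" "x < (b ^^ Suc n) x0"
      using orbit_bracket[OF b J(1,3) up \<open>x0 \<in> J\<close>] by fastforce
    have "(b ^^ Suc K) x0 < (b ^^ Suc n) x0"
      using n(2) \<open>(b ^^ Suc K) x0 \<le> x\<close> by linarith
    then have "Suc K < Suc n"
      using strict_mono_less[OF mono_x0, of "Suc K" "Suc n"] by blast
    then have "K \<le> n - 1" "2 * n = Suc n + (n - 1)"
      by auto
    note \<open>x < (b ^^ Suc n) x0\<close>
    also have "(b ^^ Suc n) x0 < (b ^^ Suc n) ((b ^^ (n - 1)) (a x0))"
      using K strict_mono_leD[OF mono_ax0 \<open>K \<le> n - 1\<close>] b by simp
    also have "\<dots> = (b ^^ (2 * n)) (a x0)"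
      by (simp only: \<open>2 * n = Suc n + (n - 1)\<close> funpow_add comp_apply)
    also have "\<dots> = a ((b ^^ n) x0)"
      using conj_to_square_funpow[OF conj] by simp
    also have "\<dots> \<le> a x"
      using n(1) a by simp
    finally show "x < a x" .
  qed
  moreover have "(b ^^ Suc K) x0 \<in> J"
    using invariant_funpow[OF J(3)] \<open>x0 \<in> J\<close> by blast
  ultimately show ?thesis by blast
qed

lemma conj_to_square_eventually_above:
  assumes a: "incr_homeo a" and b: "incr_homeo b" and conj: "conj_to_square a b"
    and J: "is_interval J" "invariant a J" "invariant b J"
    and free: "\<forall>x\<in>J. b x \<noteq> x" and "x0 \<in> J"
  shows "\<exists>z\<in>J. \<forall>x\<in>J. z \<le> x \<longrightarrow> x < a x"
  using fixed_point_free_up_or_down[OF incr_homeo_continuous_on[OF b] J(1) free]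
proof
  assume "\<forall>x\<in>J. x < b x"
  then show ?thesis
    using conj_to_square_above_of_up[OF assms(1-6)] \<open>x0 \<in> J\<close> by blast
next
  assume down: "\<forall>x\<in>J. b x < x"
  have "invariant (inv b) J"
    using invariant_inv[OF b J(3)] .
  moreover have "\<forall>x\<in>J. x < inv b x"
    using down calculation b by (metis invariant_def incr_homeo_f_inv)
  ultimately show ?thesis
    using conj_to_square_above_of_up[OF a incr_homeo_inv[OF b] conj_to_square_inv[OF b conj] J(1,2)]
      \<open>x0 \<in> J\<close> by blast
qed

lemma conj_to_square_eventually_below:
  assumes a: "incr_homeo a" and b: "incr_homeo b" and conj: "conj_to_square a b"
    and J: "is_interval J" "invariant a J" "invariant b J"
    and free: "\<forall>x\<in>J. b x \<noteq> x" and "x0 \<in> J"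
  shows "\<exists>z\<in>J. \<forall>x\<in>J. x \<le> z \<longrightarrow> a x < x"
proof -
  have "\<forall>x\<in>uminus ` J. reflect b x \<noteq> x"
    using free by (auto simp: reflect_def)
  then obtain z where "z \<in> uminus ` J" and z: "\<forall>x\<in>uminus ` J. z \<le> x \<longrightarrow> x < reflect a x"
    using conj_to_square_eventually_above[OF incr_homeo_reflect[OF a] incr_homeo_reflect[OF b]
        conj_to_square_reflect[OF conj] _ invariant_reflect[OF J(2)] invariant_reflect[OF J(3)]]
      J(1) \<open>x0 \<in> J\<close> by fastforce
  have "a x < x" if "x \<in> J" "x \<le> - z" for x
    using z[rule_format, of "- x"] that by (auto simp: reflect_def)
  then show ?thesis
    using \<open>z \<in> uminus ` J\<close> by force
qed

section \<open>Cyclic configurations of homeomorphisms\<close>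

lemma conj_to_square_greatest_fixed_point:
  assumes a: "incr_homeo a" and b: "incr_homeo b" and conj: "conj_to_square a b"
    and J: "is_interval J" "invariant a J" "invariant b J"
    and free: "\<forall>x\<in>J. b x \<noteq> x" and "x0 \<in> J"
  shows "\<exists>s. greatest_fixed_point a J s"
proof -
  obtain lo where lo: "lo \<in> J" "\<forall>x\<in>J. x \<le> lo \<longrightarrow> a x < x"
    using conj_to_square_eventually_below[OF assms] by blast
  obtain hi where hi: "hi \<in> J" "\<forall>x\<in>J. hi \<le> x \<longrightarrow> x < a x"
    using conj_to_square_eventually_above[OF assms] by blast
  obtain u where "u \<in> J" "a u = u"
    using fixed_point_free_up_or_down[OF incr_homeo_continuous_on[OF a] J(1)] lo hi by force
  moreover have "\<forall>x\<in>J. a x = x \<longrightarrow> x \<le> hi"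
    using hi(2) by force
  ultimately show ?thesis
    using greatest_fixed_point_exists[OF incr_homeo_continuous_on[OF a] J(1)] hi(1) by blast
qed

text \<open>The greatest fixed point \<open>s\<close> of \<open>b\<close> is fixed by \<open>a\<close>, and \<open>b\<close> has no fixed point in
  \<open>I \<inter> {s<..}\<close>, so the previous lemma applies there.\<close>
lemma conj_to_square_greater_fixed_point:
  assumes a: "incr_homeo a" and b: "incr_homeo b" and conj: "conj_to_square a b"
    and I: "is_interval I" "invariant a I" "invariant b I"
    and s: "greatest_fixed_point b I s" and "y \<in> I" "s < y"
  shows "\<exists>t. greatest_fixed_point a I t \<and> s < t"
proof -
  have "s \<in> I" "b s = s" and s_max: "\<forall>x\<in>I. b x = x \<longrightarrow> x \<le> s"
    using s by (simp_all add: greatest_fixed_point_def)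
  have "invariant a (I \<inter> {x. b x = x})"
    using invariant_Int[OF I(2) invariant_fixed_points[OF a b conj]] .
  then have "a s = s"
    using invariant_fixes_greatest[OF a] \<open>s \<in> I\<close> \<open>b s = s\<close> s_max by blast
  define J where "J = I \<inter> {s<..}"
  have J: "is_interval J" "invariant a J" "invariant b J"
    unfolding J_def using I \<open>a s = s\<close> \<open>b s = s\<close> a b
    by (simp_all add: is_interval_Int invariant_Int invariant_greaterThan)
  have "\<forall>x\<in>J. b x \<noteq> x" "y \<in> J"
    using s_max \<open>y \<in> I\<close> \<open>s < y\<close> by (auto simp: J_def)
  then obtain t where t: "greatest_fixed_point a J t"
    using conj_to_square_greatest_fixed_point[OF a b conj J] by blast
  then have "t \<in> I" "s < t" "a t = t"
    by (auto simp: greatest_fixed_point_def J_def)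
  moreover have "x \<le> t" if "x \<in> I" "a x = x" for x
    using t that \<open>s < t\<close> by (cases "s < x") (auto simp: greatest_fixed_point_def J_def)
  ultimately show ?thesis
    unfolding greatest_fixed_point_def by blast
qed

lemma invariant_fixed_point_free_right:
  assumes h: "incr_homeo h" and "h p = p" "invariant h F"
  shows "invariant h {y. \<forall>z\<in>{p<..y}. z \<notin> F}"
proof -
  have image: "h ` {p<..y} = {p<..h y}" for y
  proof
    show "h ` {p<..y} \<subseteq> {p<..h y}"
    proof (rule image_subsetI)
      fix z assume "z \<in> {p<..y}"
      then show "h z \<in> {p<..h y}"
        using incr_homeo_less_iff[OF h, of p z] incr_homeo_le_iff[OF h, of z y] \<open>h p = p\<close> by simp
    qed
    show "{p<..h y} \<subseteq> h ` {p<..y}"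
    proof
      fix z assume "z \<in> {p<..h y}"
      then have "inv h z \<in> {p<..y}"
        using h \<open>h p = p\<close> incr_homeo_less_iff[OF h, of p "inv h z"]
          incr_homeo_le_iff[OF h, of "inv h z" y]
        by simp
      then show "z \<in> h ` {p<..y}"
        using h by (metis image_eqI incr_homeo_f_inv)
    qed
  qed
  have "(\<forall>z\<in>{p<..h y}. z \<notin> F) \<longleftrightarrow> (\<forall>z\<in>{p<..y}. z \<notin> F)" for y
  proof -
    have "(\<forall>z\<in>{p<..h y}. z \<notin> F) \<longleftrightarrow> (\<forall>z\<in>{p<..y}. h z \<notin> F)"
      unfolding image[symmetric] by blast
    also have "\<dots> \<longleftrightarrow> (\<forall>z\<in>{p<..y}. z \<notin> F)"
      using \<open>invariant h F\<close> by (simp add: invariant_def)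
    finally show ?thesis .
  qed
  then show ?thesis
    unfolding invariant_def by simp
qed

text \<open>\<open>J\<close> is the part of \<open>I\<close> between \<open>p\<close> and the next fixed point of \<open>b\<close>. It is invariant
  under \<open>a\<close> and \<open>b\<close>, so \<open>a\<close> moves the points of \<open>J\<close> near \<open>p\<close> downwards.\<close>
lemma conj_to_square_free_right:
  assumes a: "incr_homeo a" and b: "incr_homeo b" and conj: "conj_to_square a b"
    and I: "is_interval I" "invariant a I" "invariant b I"
    and "p \<in> I" "a p = p" "b p = p" "r \<in> I" "p < r" and free: "\<forall>z\<in>{p<..r}. b z \<noteq> z"
  shows "\<exists>r'\<in>I. p < r' \<and> (\<forall>z\<in>{p<..r'}. a z \<noteq> z)"
proof -
  define K where "K = {y. \<forall>z\<in>{p<..y}. z \<notin> {x. b x = x}}"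
  define J where "J = I \<inter> {p<..} \<inter> K"
  have "is_interval K"
    unfolding is_interval_1 K_def by fastforce
  moreover have "invariant a K" "invariant b K"
    unfolding K_def
    using invariant_fixed_point_free_right[OF a \<open>a p = p\<close> invariant_fixed_points[OF a b conj]]
      invariant_fixed_point_free_right[OF b \<open>b p = p\<close> invariant_own_fixed_points[OF b]] .
  ultimately have J: "is_interval J" "invariant a J" "invariant b J"
    unfolding J_def using I a b \<open>a p = p\<close> \<open>b p = p\<close>
    by (simp_all add: is_interval_Int invariant_Int invariant_greaterThan)
  have "\<forall>x\<in>J. b x \<noteq> x" "r \<in> J"
    using free \<open>r \<in> I\<close> \<open>p < r\<close> by (auto simp: J_def K_def)
  then obtain lo where "lo \<in> J" and lo: "\<forall>x\<in>J. x \<le> lo \<longrightarrow> a x < x"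
    using conj_to_square_eventually_below[OF a b conj J] by blast
  have "lo \<in> I" "p < lo" "lo \<in> K"
    using \<open>lo \<in> J\<close> by (auto simp: J_def)
  have "z \<in> J" if "z \<in> {p<..lo}" for z
  proof -
    have "z \<in> I"
      using that \<open>p \<in> I\<close> \<open>lo \<in> I\<close> I(1) unfolding is_interval_1 by fastforce
    moreover have "z \<in> K"
      using that \<open>lo \<in> K\<close> by (auto simp: K_def)
    ultimately show ?thesis
      using that by (simp add: J_def)
  qed
  then have "\<forall>z\<in>{p<..lo}. a z \<noteq> z"
    using lo by fastforce
  moreover note \<open>lo \<in> I\<close> \<open>p < lo\<close>
  ultimately show ?thesis
    by blast
qed

text \<open>Indices of the generators live in \<open>\<int>/4\<int>\<close>, encoded by a 4-periodic sequence \<open>f\<close>.\<close>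
locale cyclic_action =
  fixes f :: "nat \<Rightarrow> real \<Rightarrow> real" and I :: "real set"
  assumes incr_homeo: "incr_homeo (f i)"
    and conj: "conj_to_square (f i) (f (Suc i))"
    and periodic: "f (i + 4) = f i"
    and interval: "is_interval I" and open_I: "open I" and nonempty: "I \<noteq> {}"
    and invariant: "invariant (f i) I"

begin

lemma exists_greater:
  assumes "x \<in> I" shows "\<exists>y\<in>I. x < y"
proof -
  obtain e where "e > 0" "ball x e \<subseteq> I"
    using open_I assms open_contains_ball by blast
  then have "x + e / 2 \<in> I"
    by (auto simp: subset_iff dist_real_def)
  then show ?thesis
    using \<open>e > 0\<close> by (intro bexI) auto
qed

lemma greater_fixed_point_before:
  assumes "greatest_fixed_point (f (Suc i)) I s"
  shows "\<exists>t. greatest_fixed_point (f i) I t \<and> s < t"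
proof -
  have "s \<in> I"
    using assms by (simp add: greatest_fixed_point_def)
  then obtain y where "y \<in> I" "s < y"
    using exists_greater by blast
  then show ?thesis
    using conj_to_square_greater_fixed_point[OF incr_homeo incr_homeo conj interval
        invariant invariant assms] by blast
qed

lemma greatest_fixed_point_climbs:
  "greatest_fixed_point (f (i + Suc n)) I s \<Longrightarrow> \<exists>t. greatest_fixed_point (f i) I t \<and> s < t"
proof (induction n arbitrary: s)
  case 0
  then show ?case
    using greater_fixed_point_before by simp
next
  case (Suc n)
  then obtain t' where "greatest_fixed_point (f (i + Suc n)) I t'" "s < t'"
    using greater_fixed_point_before[of "i + Suc n" s] by auto
  then show ?case
    using Suc.IH by force
qed

lemma no_greatest_fixed_point: "\<not> greatest_fixed_point (f i) I s"
proof
  assume "greatest_fixed_point (f i) I s"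
  then have "greatest_fixed_point (f (i + Suc 3)) I s"
    using periodic by simp
  then obtain t where "greatest_fixed_point (f i) I t" "s < t"
    using greatest_fixed_point_climbs by blast
  with \<open>greatest_fixed_point (f i) I s\<close> show False
    unfolding greatest_fixed_point_def by force
qed

lemma fixed_point_exists: "\<exists>u\<in>I. f i u = u"
proof (rule ccontr)
  assume "\<not> ?thesis"
  then have "\<forall>x\<in>I. f (Suc (i + 3)) x \<noteq> x"
    using periodic[of i] by (simp add: add.commute)
  then obtain s where "greatest_fixed_point (f (i + 3)) I s"
    using conj_to_square_greatest_fixed_point[OF incr_homeo incr_homeo conj interval
        invariant invariant] nonempty by blast
  then show False
    using no_greatest_fixed_point by blast
qed

lemma fixed_points_unbounded_above: "x \<in> I \<Longrightarrow> \<exists>y\<in>I. f i y = y \<and> x \<le> y"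
proof (rule ccontr)
  assume "x \<in> I" "\<not> (\<exists>y\<in>I. f i y = y \<and> x \<le> y)"
  then have bounded: "\<forall>y\<in>I. f i y = y \<longrightarrow> y \<le> x"
    by force
  obtain u where "u \<in> I" "f i u = u"
    using fixed_point_exists by blast
  then obtain s where "greatest_fixed_point (f i) I s"
    using greatest_fixed_point_exists[OF incr_homeo_continuous_on[OF incr_homeo] interval
        \<open>u \<in> I\<close> \<open>f i u = u\<close> \<open>x \<in> I\<close> bounded] by blast
  then show False
    using no_greatest_fixed_point by blast
qed

lemma cyclic_action_reflect: "cyclic_action (\<lambda>i. reflect (f i)) (uminus ` I)"
  by unfold_locales
    (simp_all add: incr_homeo_reflect incr_homeo conj_to_square_reflect conj periodic interval
      open_negations open_I nonempty invariant_reflect invariant)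

lemma fixed_points_unbounded_below: "x \<in> I \<Longrightarrow> \<exists>y\<in>I. f i y = y \<and> y \<le> x"
proof -
  assume "x \<in> I"
  then have "- x \<in> uminus ` I"
    by simp
  then obtain y where "y \<in> uminus ` I" "reflect (f i) y = y" "- x \<le> y"
    using cyclic_action.fixed_points_unbounded_above[OF cyclic_action_reflect] by blast
  then show ?thesis
    by (auto simp: reflect_def intro!: bexI[of _ "- y"])
qed

end

section \<open>Rigidity near a common fixed point\<close>

definition C1_pos_deriv :: "(real \<Rightarrow> real) \<Rightarrow> bool" where
  "C1_pos_deriv f \<longleftrightarrow>
     (\<exists>f'. (\<forall>x. (f has_real_derivative f' x) (at x)) \<and> continuous_on UNIV f' \<and> (\<forall>x. 0 < f' x))"

lemma C1_pos_derivE: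
  assumes "C1_pos_deriv f"
  obtains f' where "\<And>x. (f has_real_derivative f' x) (at x)" "\<And>x. isCont f' x" "\<And>x. 0 < f' x"
  using assms unfolding C1_pos_deriv_def by (metis continuous_on_eq_continuous_at open_UNIV UNIV_I)

lemma real_mvt_in_ball:
  assumes "\<And>t. (f has_real_derivative f' t) (at t)" "x \<in> ball q d" "y \<in> ball q d"
  shows "\<exists>z\<in>ball q d. f y - f x = (y - x) * f' z"
proof -
  have "\<exists>z\<in>closed_segment x y. f y - f x = (y - x) * f' z"
  proof (cases x y rule: linorder_cases)
    case less
    then obtain z where "x < z" "z < y" "f y - f x = (y - x) * f' z"
      using MVT2[of x y f f'] assms(1) by blast
    then show ?thesis
      by (intro bexI[of _ z]) (auto simp: closed_segment_eq_real_ivl)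
  next
    case greater
    then obtain z where "y < z" "z < x" "f x - f y = (x - y) * f' z"
      using MVT2[of y x f f'] assms(1) by blast
    then show ?thesis
      by (intro bexI[of _ z]) (auto simp: closed_segment_eq_real_ivl algebra_simps)
  qed simp
  then show ?thesis
    using closed_segment_subset[OF assms(2,3) convex_ball] by blast
qed

lemma derivative_ratio_near:
  fixes g :: "real \<Rightarrow> real"
  assumes "isCont g q" "0 < g q" "0 \<le> k" "k < 1"
  shows "\<exists>d>0. \<forall>s\<in>ball q d. \<forall>t\<in>ball q d. 0 < g t \<and> k * g t \<le> g s"
proof -
  define e where "e = g q * (1 - k) / 2"
  have "0 < e" "e < g q"
    using assms(2-4) by (simp_all add: e_def)
  then obtain d where "0 < d" and d: "\<forall>t. dist t q < d \<longrightarrow> dist (g t) (g q) < e"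
    using assms(1) unfolding continuous_at_eps_delta by blast
  have near: "g q - e < g t" "g t < g q + e" if "t \<in> ball q d" for t
    using d that by (auto simp: dist_commute dist_real_def abs_less_iff)
  have "g q - e - k * (g q + e) = g q * (1 - k)\<^sup>2 / 2"
    unfolding e_def by (simp add: field_simps power2_eq_square)
  moreover have "0 \<le> g q * (1 - k)\<^sup>2 / 2"
    using assms(2) by simp
  ultimately have "k * (g q + e) \<le> g q - e"
    by linarith
  then have "k * g t \<le> g s" if "s \<in> ball q d" "t \<in> ball q d" for s t
    using near[OF that(1)] near[OF that(2)] mult_left_mono[of "g t" "g q + e" k] assms(3)
    by linarith
  moreover have "0 < g t" if "t \<in> ball q d" for t
    using near[OF that] \<open>e < g q\<close> by linarith
  ultimately show ?thesis
    using \<open>0 < d\<close> by blast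
qed

lemma derivative_near_value:
  fixes g :: "real \<Rightarrow> real"
  assumes "isCont g q" "0 < g q"
  shows "\<exists>d>0. \<forall>t\<in>ball q d. g q / 2 \<le> g t \<and> \<bar>g t\<bar> \<le> 3 * g q / 2"
proof -
  obtain d where "0 < d" and d: "\<forall>t. dist t q < d \<longrightarrow> dist (g t) (g q) < g q / 2"
    using assms unfolding continuous_at_eps_delta by (meson half_gt_zero)
  have "g q / 2 \<le> g t \<and> \<bar>g t\<bar> \<le> 3 * g q / 2" if "t \<in> ball q d" for t
  proof -
    have "dist t q < d"
      using that by (simp add: dist_commute)
    then have "dist (g t) (g q) < g q / 2"
      using d by blast
    then show ?thesis
      unfolding dist_real_def by arith
  qed
  then show ?thesis
    using \<open>0 < d\<close> by blast
qed

lemma derivative_estimates_near: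
  fixes c' a' :: "real \<Rightarrow> real"
  assumes "isCont c' q" "0 < c' q" "isCont a' q" "0 < a' q" "0 \<le> k" "k < 1"
  obtains d where "0 < d" "\<forall>s\<in>ball q d. \<forall>t\<in>ball q d. 0 < c' t \<and> k * c' t \<le> c' s"
    "\<forall>t\<in>ball q d. a' q / 2 \<le> a' t \<and> \<bar>a' t\<bar> \<le> 3 * a' q / 2"
proof -
  obtain d1 where "0 < d1" and c_est: "\<forall>s\<in>ball q d1. \<forall>t\<in>ball q d1. 0 < c' t \<and> k * c' t \<le> c' s"
    using derivative_ratio_near[OF assms(1,2,5,6)] by blast
  obtain d2 where "0 < d2" and a_est: "\<forall>t\<in>ball q d2. a' q / 2 \<le> a' t \<and> \<bar>a' t\<bar> \<le> 3 * a' q / 2"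
    using derivative_near_value[OF assms(3,4)] by blast
  have "0 < min d1 d2" "ball q (min d1 d2) \<subseteq> ball q d1" "ball q (min d1 d2) \<subseteq> ball q d2"
    using \<open>0 < d1\<close> \<open>0 < d2\<close> by (simp_all add: subset_ball)
  then show ?thesis
    using that c_est a_est by blast
qed

lemma displacement_ratio_bound:
  assumes deriv: "\<And>t. (a has_real_derivative a' t) (at t)" and "a q = q"
    and bound: "\<forall>t\<in>ball q d. \<bar>a' t\<bar> \<le> M" and x: "x \<in> ball q d"
  shows "\<bar>a x - x\<bar> / \<bar>x - q\<bar> \<le> M + 1"
proof -
  have "q \<in> ball q d"
    using x by (metis centre_in_ball le_less_trans mem_ball zero_le_dist)
  then obtain z where "z \<in> ball q d" "a x - a q = (x - q) * a' z"
    using real_mvt_in_ball[OF deriv _ x] by blast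
  then have "\<bar>a x - x\<bar> = \<bar>x - q\<bar> * \<bar>a' z - 1\<bar>"
    using \<open>a q = q\<close> by (simp add: abs_mult[symmetric] algebra_simps)
  moreover have "\<bar>a' z - 1\<bar> \<le> M + 1"
    using bound \<open>z \<in> ball q d\<close> abs_triangle_ineq4[of "a' z" 1] by force
  ultimately show ?thesis
    by (cases "x = q") (auto simp: divide_le_eq)
qed

lemma displacement_preimage_mvt:
  assumes c_deriv: "\<And>t. (c has_real_derivative c' t) (at t)"
    and a_deriv: "\<And>t. (a has_real_derivative a' t) (at t)"
    and conj: "c (a x) = a (a (c x))"
    and in_ball: "x \<in> ball q d" "a x \<in> ball q d" "c x \<in> ball q d" "a (c x) \<in> ball q d"
  obtains \<xi> \<eta> where "\<xi> \<in> ball q d" "\<eta> \<in> ball q d"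
    "(a x - x) * c' \<xi> = (a (c x) - c x) * (1 + a' \<eta>)"
proof -
  define y where "y = c x"
  obtain \<xi> where \<xi>: "\<xi> \<in> ball q d" "c (a x) - c x = (a x - x) * c' \<xi>"
    using real_mvt_in_ball[OF c_deriv in_ball(1,2)] by blast
  obtain \<eta> where \<eta>: "\<eta> \<in> ball q d" "a (a y) - a y = (a y - y) * a' \<eta>"
    using real_mvt_in_ball[OF a_deriv in_ball(3,4)[folded y_def]] by blast
  have "(a x - x) * c' \<xi> = a (a y) - y"
    using \<xi>(2) conj by (simp add: y_def)
  also have "\<dots> = (a (a y) - a y) + (a y - y)"
    by simp
  also have "\<dots> = (a y - y) * (1 + a' \<eta>)"
    unfolding \<eta>(2) by (simp add: distrib_left)
  finally show ?thesis
    using that \<xi>(1) \<eta>(1) by (simp add: y_def)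
qed

text \<open>With \<open>y = c x\<close>, the previous lemma and \<open>y - q = c'(\<zeta>) (x - q)\<close> show that passing from
  \<open>y\<close> to its preimage \<open>x\<close> multiplies the ratio of the displacement to the distance from \<open>q\<close> by
  \<open>(1 + a'(\<eta>)) c'(\<zeta>) / c'(\<xi>)\<close>.\<close>
lemma displacement_ratio_step:
  assumes c_deriv: "\<And>t. (c has_real_derivative c' t) (at t)"
    and a_deriv: "\<And>t. (a has_real_derivative a' t) (at t)"
    and conj: "c (a x) = a (a (c x))" and "c q = q"
    and c_est: "\<forall>s\<in>ball q d. \<forall>t\<in>ball q d. 0 < c' t \<and> k * c' t \<le> c' s"
    and a_est: "\<forall>t\<in>ball q d. \<beta> \<le> a' t" and "0 \<le> \<beta>" "0 \<le> k"
    and in_ball: "x \<in> ball q d" "a x \<in> ball q d" "c x \<in> ball q d" "a (c x) \<in> ball q d"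
  shows "(1 + \<beta>) * k * (\<bar>a (c x) - c x\<bar> / \<bar>c x - q\<bar>) \<le> \<bar>a x - x\<bar> / \<bar>x - q\<bar>"
proof (cases "x = q")
  case True
  then show ?thesis using \<open>c q = q\<close> by simp
next
  case False
  define y where "y = c x"
  have "q \<in> ball q d"
    using in_ball(1) by (metis centre_in_ball le_less_trans mem_ball zero_le_dist)
  obtain \<zeta> where \<zeta>: "\<zeta> \<in> ball q d" "c x - c q = (x - q) * c' \<zeta>"
    using real_mvt_in_ball[OF c_deriv \<open>q \<in> ball q d\<close> in_ball(1)] by blast
  obtain \<xi> \<eta> where "\<xi> \<in> ball q d" "\<eta> \<in> ball q d"
    and eq: "(a x - x) * c' \<xi> = (a y - y) * (1 + a' \<eta>)"
    using displacement_preimage_mvt[OF c_deriv a_deriv conj in_ball] unfolding y_def by blast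
  have pos: "0 < c' \<zeta>" "0 < c' \<xi>" "\<beta> \<le> a' \<eta>"
    using c_est a_est \<zeta>(1) \<open>\<xi> \<in> ball q d\<close> \<open>\<eta> \<in> ball q d\<close> by blast+
  have dist: "\<bar>y - q\<bar> = \<bar>x - q\<bar> * c' \<zeta>"
    using \<zeta>(2) \<open>c q = q\<close> pos(1) by (simp add: y_def abs_mult)
  have "\<bar>a x - x\<bar> * \<bar>c' \<xi>\<bar> = \<bar>a y - y\<bar> * \<bar>1 + a' \<eta>\<bar>"
    using eq by (simp add: abs_mult[symmetric])
  then have disp: "\<bar>a x - x\<bar> * c' \<xi> = \<bar>a y - y\<bar> * (1 + a' \<eta>)"
    using pos \<open>0 \<le> \<beta>\<close> by simp
  have "(1 + \<beta>) * k * \<bar>a y - y\<bar> \<le> (1 + a' \<eta>) * k * \<bar>a y - y\<bar>"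
    using pos(3) \<open>0 \<le> k\<close> by (intro mult_right_mono) auto
  also have "\<dots> = k * c' \<xi> * \<bar>a x - x\<bar>"
    using disp by (simp add: mult_ac)
  also have "\<dots> \<le> c' \<zeta> * \<bar>a x - x\<bar>"
    using c_est \<zeta>(1) \<open>\<xi> \<in> ball q d\<close> by (simp add: mult_right_mono)
  finally have "(1 + \<beta>) * k * \<bar>a y - y\<bar> / \<bar>y - q\<bar> \<le> c' \<zeta> * \<bar>a x - x\<bar> / \<bar>y - q\<bar>"
    by (simp add: divide_right_mono)
  also have "\<dots> = \<bar>a x - x\<bar> / \<bar>x - q\<bar>"
    using dist pos(1) by simp
  finally show ?thesis
    by (simp add: y_def)
qed

lemma geometric_growth_unbounded:
  fixes r :: "nat \<Rightarrow> real"
  assumes "1 < \<theta>" "0 < r N" and grow: "\<And>n. N \<le> n \<Longrightarrow> \<theta> * r n \<le> r (Suc n)"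
  shows "\<exists>n\<ge>N. M < r n"
proof -
  have "\<theta> ^ j * r N \<le> r (N + j)" for j
  proof (induction j)
    case (Suc j)
    have "\<theta> ^ Suc j * r N \<le> \<theta> * r (N + j)"
      using Suc.IH assms(1) by simp
    also have "\<dots> \<le> r (N + Suc j)"
      using grow[of "N + j"] by simp
    finally show ?case .
  qed simp
  moreover obtain j where "M / r N < \<theta> ^ j"
    using real_arch_pow[OF assms(1)] by blast
  ultimately have "M < r (N + j)"
    using assms(2) by (simp add: divide_less_eq) (meson less_le_trans)
  then show ?thesis
    by (intro exI[of _ "N + j"]) simp
qed

lemma conj_to_square_preimages_moved:
  assumes "incr_homeo c" "incr_homeo a" "conj_to_square c a"
    and pre: "\<And>n. c (w (Suc n)) = w n" and "a (w 0) \<noteq> w 0"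
  shows "a (w n) \<noteq> w n"
proof (induction n)
  case (Suc n)
  have "a (c x) = c x \<longleftrightarrow> a x = x" for x
    using invariant_fixed_points[OF assms(1-3)] by (simp add: invariant_def)
  then show ?case
    using Suc pre[of n] by metis
qed (fact assms(5))

lemma preimage_limit_fixed:
  assumes "isCont c q" "\<And>n. c (w (Suc n)) = w n" "w \<longlonglongrightarrow> q"
  shows "c q = q"
proof -
  have "(\<lambda>n. c (w (Suc n))) \<longlonglongrightarrow> c q"
    using isCont_tendsto_compose[OF assms(1) LIMSEQ_Suc[OF assms(3)]] .
  then show ?thesis
    using assms(2,3) LIMSEQ_unique by fastforce
qed

text \<open>Near a common fixed point \<open>q\<close>, the ratio of the displacement \<open>\<bar>a x - x\<bar>\<close> to the
  distance \<open>\<bar>x - q\<bar>\<close> grows geometrically along a sequence of \<open>c\<close>-preimages (apply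
  \<open>displacement_ratio_step\<close> with \<open>\<beta> = a'(q)/2\<close> and \<open>k\<close> chosen so that \<open>(1 + \<beta>) k > 1\<close>),
  whereas the mean value theorem bounds it by \<open>sup \<bar>a'\<bar> + 1\<close>.\<close>
lemma C1_conj_to_square_preimages_fixed:
  assumes c: "incr_homeo c" "C1_pos_deriv c" and a: "incr_homeo a" "C1_pos_deriv a"
    and conj: "conj_to_square c a" and "c q = q" "a q = q"
    and pre: "\<And>n. c (w (Suc n)) = w n" and lim: "w \<longlonglongrightarrow> q"
  shows "a (w 0) = w 0"
proof (rule ccontr)
  assume "a (w 0) \<noteq> w 0"
  then have moved: "a (w n) \<noteq> w n" for n
    using conj_to_square_preimages_moved[where w = w, OF c(1) a(1) conj pre] by blast
  obtain c' where c': "\<And>t. (c has_real_derivative c' t) (at t)" "isCont c' q" "0 < c' q"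
    using c(2) C1_pos_derivE by metis
  obtain a' where a': "\<And>t. (a has_real_derivative a' t) (at t)" "isCont a' q" "0 < a' q"
    using a(2) C1_pos_derivE by metis
  define B where "B = a' q"
  define k where "k = (4 + B) / (4 + 2 * B)"
  have "0 < B" "0 \<le> k" "k < 1" "(1 + B / 2) * k = 1 + B / 4"
    using a'(3) by (simp_all add: B_def k_def field_simps)
  obtain d where "0 < d" and c_near: "\<forall>s\<in>ball q d. \<forall>t\<in>ball q d. 0 < c' t \<and> k * c' t \<le> c' s"
    and a_near: "\<forall>t\<in>ball q d. B / 2 \<le> a' t \<and> \<bar>a' t\<bar> \<le> 3 * B / 2"
    using derivative_estimates_near[OF c'(2,3) a'(2,3) \<open>0 \<le> k\<close> \<open>k < 1\<close>] unfolding B_def by blast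
  have "(\<lambda>n. a (w n)) \<longlonglongrightarrow> q"
    using isCont_tendsto_compose[OF incr_homeo_isCont[OF a(1)] lim] \<open>a q = q\<close> by simp
  then have "\<forall>\<^sub>F n in sequentially. dist (w n) q < d" "\<forall>\<^sub>F n in sequentially. dist (a (w n)) q < d"
    using lim \<open>0 < d\<close> by (auto intro: tendstoD)
  then have "\<forall>\<^sub>F n in sequentially. w n \<in> ball q d \<and> a (w n) \<in> ball q d"
    by eventually_elim (simp add: dist_commute)
  then obtain N where N: "\<And>n. N \<le> n \<Longrightarrow> w n \<in> ball q d \<and> a (w n) \<in> ball q d"
    unfolding eventually_sequentially by blast
  define r where "r n = \<bar>a (w n) - w n\<bar> / \<bar>w n - q\<bar>" for n
  have "w N \<noteq> q"
    using moved[of N] \<open>a q = q\<close> by auto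
  then have "0 < r N"
    using moved[of N] by (simp add: r_def)
  moreover have "(1 + B / 4) * r n \<le> r (Suc n)" if "N \<le> n" for n
  proof -
    have "(1 + B / 2) * k * (\<bar>a (c (w (Suc n))) - c (w (Suc n))\<bar> / \<bar>c (w (Suc n)) - q\<bar>)
        \<le> \<bar>a (w (Suc n)) - w (Suc n)\<bar> / \<bar>w (Suc n) - q\<bar>"
      using displacement_ratio_step[OF c'(1) a'(1) _ \<open>c q = q\<close> c_near, of "w (Suc n)" "B / 2"]
        conj a_near \<open>0 < B\<close> \<open>0 \<le> k\<close> N[of n] N[of "Suc n"] that
      by (simp add: pre conj_to_square_def)
    then show ?thesis
      using \<open>(1 + B / 2) * k = 1 + B / 4\<close> by (simp add: pre r_def)
  qed
  ultimately obtain n where "N \<le> n" "3 * B / 2 + 1 < r n"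
    using geometric_growth_unbounded[of "1 + B / 4" r N] \<open>0 < B\<close> by auto
  moreover have "r n \<le> 3 * B / 2 + 1" if "N \<le> n" for n
    using displacement_ratio_bound[OF a'(1) \<open>a q = q\<close>, of d "3 * B / 2" "w n"] N[OF that] a_near
    by (simp add: r_def)
  ultimately show False
    by fastforce
qed

lemma C1_conj_to_square_fixed_between:
  assumes c: "incr_homeo c" "C1_pos_deriv c" and a: "incr_homeo a" "C1_pos_deriv a"
    and conj: "conj_to_square c a" and "a p = p"
    and lim_p: "(\<lambda>n. (inv c ^^ n) p) \<longlonglongrightarrow> q" and lim_m: "(\<lambda>n. (inv c ^^ n) m) \<longlonglongrightarrow> q"
    and "p \<le> x" "x \<le> m"
  shows "a x = x"
proof -
  have ic: "incr_homeo (inv c)"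
    using incr_homeo_inv[OF c(1)] .
  have pre: "c ((inv c ^^ Suc n) y) = (inv c ^^ n) y" for n y
    using c(1) by simp
  have "c q = q"
    using preimage_limit_fixed[OF incr_homeo_isCont[OF c(1)] pre lim_p] .
  have "invariant (inv c) {y. a y = y}"
    using invariant_inv[OF c(1) invariant_fixed_points[OF c(1) a(1) conj]] .
  then have fixed: "a ((inv c ^^ n) p) = (inv c ^^ n) p" for n
    using invariant_funpow[of "inv c" "{y. a y = y}" n p] \<open>a p = p\<close> by simp
  have "(\<lambda>n. (inv c ^^ n) p) \<longlonglongrightarrow> a q"
    using isCont_tendsto_compose[OF incr_homeo_isCont[OF a(1)] lim_p] unfolding fixed .
  then have "a q = q"
    using lim_p by (rule LIMSEQ_unique)
  have "(\<lambda>n. (inv c ^^ n) x) \<longlonglongrightarrow> q"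
    using \<open>p \<le> x\<close> \<open>x \<le> m\<close> ic
    by (intro tendsto_sandwich[OF _ _ lim_p lim_m]) (simp_all add: always_eventually)
  then show ?thesis
    using C1_conj_to_square_preimages_fixed[OF c a conj \<open>c q = q\<close> \<open>a q = q\<close>,
        of "\<lambda>n. (inv c ^^ n) x"] pre by simp
qed

text \<open>If \<open>c\<close> moved \<open>p\<close>, the point \<open>p'\<close> among \<open>c p\<close>, \<open>c\<^sup>-\<^sup>1 p\<close> lying above \<open>p\<close> would be
  fixed by \<open>a\<close>, hence lie beyond \<open>r\<close>. The backward \<open>c\<close>-orbits of \<open>p\<close> and \<open>p'\<close> converge to
  the same point, so that of \<open>r\<close> does too, which forces \<open>a\<close> to fix \<open>r\<close>.\<close>
lemma C1_conj_to_square_fixes_boundary_point: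
  assumes c: "incr_homeo c" "C1_pos_deriv c" and a: "incr_homeo a" "C1_pos_deriv a"
    and conj: "conj_to_square c a" and "a p = p" and "p < r" and free: "\<forall>z\<in>{p<..r}. a z \<noteq> z"
    and "c l = l" "c u = u" "l \<le> p" "p \<le> u"
  shows "c p = p"
proof (rule ccontr)
  assume "c p \<noteq> p"
  define p' where "p' = (if p < c p then c p else inv c p)"
  have "p < p'"
    using \<open>c p \<noteq> p\<close> incr_homeo_less_iff[OF incr_homeo_inv[OF c(1)], of "c p" p] c(1)
    by (auto simp: p'_def)
  have "invariant c {y. a y = y}" "invariant (inv c) {y. a y = y}"
    using invariant_fixed_points[OF c(1) a(1) conj] invariant_inv[OF c(1)] by blast+
  then have "a p' = p'"
    using \<open>a p = p\<close> by (simp add: p'_def invariant_def)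
  then have "r < p'"
    using free \<open>p < p'\<close> by (meson greaterThanAtMost_iff not_le)
  have ic: "incr_homeo (inv c)" "inv c l = l" "inv c u = u"
    using incr_homeo_inv[OF c(1)] c(1) \<open>c l = l\<close> \<open>c u = u\<close> by (metis incr_homeo_inv_f)+
  obtain q where lim_p: "(\<lambda>n. (inv c ^^ n) p) \<longlonglongrightarrow> q"
    using orbit_convergent_between_fixed_points[OF ic \<open>l \<le> p\<close> \<open>p \<le> u\<close>]
    by (auto simp: convergent_def)
  have "(\<lambda>n. (inv c ^^ n) p') \<longlonglongrightarrow> q"
  proof (cases "p < c p")
    case True
    then have "(\<lambda>n. (inv c ^^ Suc n) p') = (\<lambda>n. (inv c ^^ n) p)"
      using c(1) by (simp add: p'_def funpow_Suc_right del: funpow.simps)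
    then have "(\<lambda>n. (inv c ^^ Suc n) p') \<longlonglongrightarrow> q"
      using lim_p by (simp only:)
    then show ?thesis
      by (rule LIMSEQ_imp_Suc)
  next
    case False
    then have "(\<lambda>n. (inv c ^^ n) p') = (\<lambda>n. (inv c ^^ Suc n) p)"
      by (simp add: p'_def funpow_Suc_right del: funpow.simps)
    then show ?thesis
      using LIMSEQ_Suc[OF lim_p] by (simp only:)
  qed
  then have "a r = r"
    using C1_conj_to_square_fixed_between[OF c a conj \<open>a p = p\<close> lim_p] \<open>p < r\<close> \<open>r < p'\<close> by simp
  then show False
    using free \<open>p < r\<close> by simp
qed

locale cyclic_C1_action = cyclic_action +
  assumes C1: "C1_pos_deriv (f i)"
begin

lemma f_mod_4: "f n = f (n mod 4)"
proof -
  have "f (j + 4 * k) = f j" for j k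
  proof (induction k)
    case (Suc k)
    then show ?case
      using periodic[of "j + 4 * k"] by (simp add: algebra_simps)
  qed simp
  then show ?thesis
    by (metis mod_mult_div_eq)
qed

lemma fixed_by_four_consecutive:
  assumes "\<forall>j<4. f (i + j) p = p" shows "f n p = p"
proof -
  have "(i + (n + 3 * i) mod 4) mod 4 = n mod 4"
    by (simp add: mod_add_right_eq algebra_simps)
  then have "f n = f (i + (n + 3 * i) mod 4)"
    using f_mod_4 by metis
  then show ?thesis
    using assms by simp
qed

lemma conj_predecessor: "conj_to_square (f (j + 3)) (f j)"
  using conj[of "j + 3"] periodic[of j] by (simp add: add.commute)

lemma fixed_point_passes_back:
  assumes "p \<in> I" "f j p = p" "f (Suc j) p = p" "r \<in> I" "p < r"
    and "\<forall>z\<in>{p<..r}. f (Suc j) z \<noteq> z"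
  shows "f (j + 3) p = p \<and> (\<exists>r'\<in>I. p < r' \<and> (\<forall>z\<in>{p<..r'}. f j z \<noteq> z))"
proof -
  obtain r' where r': "r' \<in> I" "p < r'" "\<forall>z\<in>{p<..r'}. f j z \<noteq> z"
    using conj_to_square_free_right[OF incr_homeo incr_homeo conj interval
        invariant invariant assms] by blast
  obtain l u where "f (j + 3) l = l" "l \<le> p" "f (j + 3) u = u" "p \<le> u"
    using fixed_points_unbounded_below[OF \<open>p \<in> I\<close>] fixed_points_unbounded_above[OF \<open>p \<in> I\<close>] by blast
  then have "f (j + 3) p = p"
    using C1_conj_to_square_fixes_boundary_point[OF incr_homeo C1 incr_homeo C1 conj_predecessor
        \<open>f j p = p\<close> \<open>p < r'\<close> r'(3)] by blast
  then show ?thesis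
    using r' by blast
qed

lemma last_fixed_point_below:
  assumes "x \<in> I" "f i x = x" "f (Suc i) x \<noteq> x"
  obtains p where "p \<in> I" "p < x" "f i p = p" "f (Suc i) p = p" "\<forall>z\<in>{p<..x}. f (Suc i) z \<noteq> z"
proof -
  obtain g where "g \<in> I" "f (Suc i) g = g" "g \<le> x"
    using fixed_points_unbounded_below[OF \<open>x \<in> I\<close>] by blast
  then have "g \<in> I \<inter> {..x}" "x \<in> I \<inter> {..x}" "\<forall>y\<in>I \<inter> {..x}. f (Suc i) y = y \<longrightarrow> y \<le> x"
    using \<open>x \<in> I\<close> by auto
  moreover have "is_interval (I \<inter> {..x})"
    by (simp add: interval is_interval_Int is_interval_ic)
  ultimately obtain p where "greatest_fixed_point (f (Suc i)) (I \<inter> {..x}) p"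
    using greatest_fixed_point_exists[OF incr_homeo_continuous_on[OF incr_homeo]]
      \<open>f (Suc i) g = g\<close> by blast
  then have "p \<in> I" "p \<le> x" "f (Suc i) p = p"
    and p_max: "\<And>y. y \<in> I \<Longrightarrow> y \<le> x \<Longrightarrow> f (Suc i) y = y \<Longrightarrow> y \<le> p"
    by (auto simp: greatest_fixed_point_def)
  have "invariant (f i) (I \<inter> {..x} \<inter> {y. f (Suc i) y = y})"
    using invariant invariant_atMost[OF incr_homeo \<open>f i x = x\<close>]
      invariant_fixed_points[OF incr_homeo incr_homeo conj] by (intro invariant_Int)
  then have "f i p = p"
    using invariant_fixes_greatest[OF incr_homeo] \<open>p \<in> I\<close> \<open>p \<le> x\<close> \<open>f (Suc i) p = p\<close> p_max
    by blast
  have "p \<noteq> x"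
    using \<open>f (Suc i) p = p\<close> assms(3) by blast
  then have "p < x"
    using \<open>p \<le> x\<close> by simp
  have "\<forall>z\<in>{p<..x}. f (Suc i) z \<noteq> z"
  proof
    fix z assume "z \<in> {p<..x}"
    then have "z \<in> I"
      using \<open>p \<in> I\<close> \<open>x \<in> I\<close> interval unfolding is_interval_1 by fastforce
    then show "f (Suc i) z \<noteq> z"
      using p_max \<open>z \<in> {p<..x}\<close> by fastforce
  qed
  then show ?thesis
    using that \<open>p \<in> I\<close> \<open>p < x\<close> \<open>f i p = p\<close> \<open>f (Suc i) p = p\<close> by blast
qed

lemma fixed_point_propagates:
  assumes "x \<in> I" "f i x = x" "f (Suc i) x \<noteq> x"
  shows "\<exists>p\<in>I. \<forall>n. f n p = p"
proof -
  obtain p where "p \<in> I" "p < x" "f i p = p" "f (Suc i) p = p" "\<forall>z\<in>{p<..x}. f (Suc i) z \<noteq> z"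
    using last_fixed_point_below[OF assms] by blast
  then obtain r where "f (i + 3) p = p" "r \<in> I" "p < r" "\<forall>z\<in>{p<..r}. f i z \<noteq> z"
    using fixed_point_passes_back[OF \<open>p \<in> I\<close> \<open>f i p = p\<close> \<open>f (Suc i) p = p\<close> \<open>x \<in> I\<close> \<open>p < x\<close>]
    by blast
  moreover have "f (Suc (i + 3)) = f i" "f (i + 3 + 3) = f (i + 2)"
    using periodic[of i] periodic[of "i + 2"] by (simp_all add: add.commute add.left_commute)
  ultimately have "f (i + 2) p = p"
    using fixed_point_passes_back[of p "i + 3" r] \<open>p \<in> I\<close> \<open>f i p = p\<close> by auto
  then have "\<forall>j<4. f (i + j) p = p"
    using \<open>f i p = p\<close> \<open>f (Suc i) p = p\<close> \<open>f (i + 3) p = p\<close>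
    by (auto simp: less_Suc_eq numeral_eq_Suc)
  then show ?thesis
    using fixed_by_four_consecutive \<open>p \<in> I\<close> by blast
qed

theorem common_fixed_point: "\<exists>p\<in>I. \<forall>n. f n p = p"
proof (rule ccontr)
  assume none: "\<not> ?thesis"
  obtain u where "u \<in> I" "f 0 u = u"
    using fixed_point_exists by blast
  have "f n u = u" for n
  proof (induction n)
    case (Suc n)
    then show ?case
      using fixed_point_propagates[OF \<open>u \<in> I\<close>] none by blast
  qed fact
  then show False
    using none \<open>u \<in> I\<close> by blast
qed

end

section \<open>Actions of Higman's group by \<open>C\<^sup>1\<close> diffeomorphisms\<close>

lemma C1_real_continuous: "C1_real g \<Longrightarrow> continuous_on UNIV g"
  unfolding C1_real_def by (meson DERIV_isCont continuous_at_imp_continuous_on)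

lemma C1_diffeo_derivative_sign:
  assumes "C1_diffeo f"
  obtains f' where "\<And>x. (f has_real_derivative f' x) (at x)" "continuous_on UNIV f'"
    "(\<forall>x. 0 < f' x) \<or> (\<forall>x. f' x < 0)"
proof -
  obtain f' where df: "\<And>x. (f has_real_derivative f' x) (at x)" and cf: "continuous_on UNIV f'"
    using assms unfolding C1_diffeo_def C1_real_def by blast
  obtain g' where dg: "\<And>x. (inv f has_real_derivative g' x) (at x)"
    using assms unfolding C1_diffeo_def C1_real_def by blast
  have "inv f \<circ> f = id"
    using assms by (simp add: C1_diffeo_def bij_is_inj)
  have "f' x \<noteq> 0" for x
  proof -
    have "((\<lambda>x. x) has_real_derivative g' (f x) * f' x) (at x)"
      using DERIV_chain[OF dg df] unfolding \<open>inv f \<circ> f = id\<close> id_def .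
    then have "g' (f x) * f' x = 1"
      using DERIV_ident DERIV_unique by blast
    then show ?thesis
      by auto
  qed
  then show ?thesis
    using continuous_nonzero_sign[OF cf connected_UNIV] that df cf by blast
qed

lemma pos_deriv_strict_mono:
  fixes f :: "real \<Rightarrow> real"
  assumes "\<And>x. (f has_real_derivative f' x) (at x)" "\<And>x. 0 < f' x"
  shows "strict_mono f"
  by (rule strict_monoI) (use assms DERIV_pos_imp_increasing in blast)

lemma neg_deriv_decreasing:
  fixes f :: "real \<Rightarrow> real"
  assumes "\<And>x. (f has_real_derivative f' x) (at x)" "\<And>x. f' x < 0" "x < y"
  shows "f y < f x"
  using DERIV_neg_imp_decreasing[OF assms(3)] assms(1,2) by blast

lemma decreasing_conj_ne_square:
  fixes f h :: "real \<Rightarrow> real"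
  assumes "bij h" and h_mono: "strict_mono h \<or> (\<forall>x y. x < y \<longrightarrow> h y < h x)"
    and f_dec: "\<forall>x y. x < y \<longrightarrow> f y < f x"
  shows "h \<circ> f \<circ> inv h \<noteq> f \<circ> f"
proof
  assume eq: "h \<circ> f \<circ> inv h = f \<circ> f"
  define u v where "u = inv h 0" and "v = inv h 1"
  have "h u = 0" "h v = 1"
    using assms(1) by (simp_all add: u_def v_def bij_is_surj surj_f_inv_f)
  from h_mono have "h (f v) < h (f u)"
  proof
    assume "strict_mono h"
    then have "u < v"
      using \<open>h u = 0\<close> \<open>h v = 1\<close> by (metis not_less strict_mono_less_eq zero_less_one)
    then show ?thesis
      using f_dec \<open>strict_mono h\<close> by (simp add: strict_mono_less)
  next
    assume h_dec: "\<forall>x y. x < y \<longrightarrow> h y < h x"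
    have "v < u"
    proof (rule ccontr)
      assume "\<not> v < u"
      then have "u < v \<or> u = v"
        by auto
      then show False
        using h_dec \<open>h u = 0\<close> \<open>h v = 1\<close> by force
    qed
    then show ?thesis
      using f_dec h_dec by blast
  qed
  moreover have "f (f 0) < f (f 1)"
    using f_dec by simp
  ultimately show False
    using fun_cong[OF eq, of 0] fun_cong[OF eq, of 1] by (simp add: u_def v_def)
qed

lemma conj_to_square_of_comp:
  assumes "bij h" "h \<circ> f \<circ> inv h = f \<circ> f"
  shows "conj_to_square h f"
  unfolding conj_to_square_def
proof
  fix x
  show "h (f x) = f (f (h x))"
    using fun_cong[OF assms(2), of "h x"] inv_f_f[OF bij_is_inj[OF assms(1)]] by simp
qed

lemma C1_diffeo_conj_to_square_increasing:
  assumes f: "C1_diffeo f" and h: "C1_diffeo h" and rel: "h \<circ> f \<circ> inv h = f \<circ> f"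
  shows "incr_homeo f" "C1_pos_deriv f"
proof -
  obtain f' where df: "\<And>x. (f has_real_derivative f' x) (at x)" "continuous_on UNIV f'"
    and f_sign: "(\<forall>x. 0 < f' x) \<or> (\<forall>x. f' x < 0)"
    using C1_diffeo_derivative_sign[OF f] by blast
  obtain h' where dh: "\<And>x. (h has_real_derivative h' x) (at x)" "continuous_on UNIV h'"
    and h_sign: "(\<forall>x. 0 < h' x) \<or> (\<forall>x. h' x < 0)"
    using C1_diffeo_derivative_sign[OF h] by blast
  have "strict_mono h \<or> (\<forall>x y. x < y \<longrightarrow> h y < h x)"
    using h_sign pos_deriv_strict_mono[OF dh(1)] neg_deriv_decreasing[OF dh(1)] by blast
  moreover have "bij h"
    using h by (simp add: C1_diffeo_def)
  ultimately have "\<not> (\<forall>x y. x < y \<longrightarrow> f y < f x)"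
    using decreasing_conj_ne_square rel by blast
  then have "\<forall>x. 0 < f' x"
    using f_sign neg_deriv_decreasing[OF df(1)] by blast
  then show "C1_pos_deriv f"
    unfolding C1_pos_deriv_def using df by blast
  have "strict_mono f"
    using pos_deriv_strict_mono[OF df(1)] \<open>\<forall>x. 0 < f' x\<close> by blast
  then show "incr_homeo f"
    using f by (simp add: incr_homeo_def C1_diffeo_def C1_real_continuous)
qed

lemma mem_connected_component_set_real:
  fixes S :: "real set"
  shows "y \<in> connected_component_set S z \<longleftrightarrow> closed_segment z y \<subseteq> S"
proof
  assume "y \<in> connected_component_set S z"
  moreover have "z \<in> connected_component_set S z"
    using calculation connected_component_in connected_component_refl by fastforce
  moreover have "convex (connected_component_set S z)"
    using connected_convex_1 by blast
  ultimately have "closed_segment z y \<subseteq> connected_component_set S z"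
    by (intro closed_segment_subset)
  then show "closed_segment z y \<subseteq> S"
    using connected_component_subset by (rule order_trans)
next
  assume "closed_segment z y \<subseteq> S"
  then show "y \<in> connected_component_set S z"
    by (auto intro: connected_componentI[OF connected_segment])
qed

lemma invariant_component_of_non_fixed:
  fixes h :: "real \<Rightarrow> real"
  assumes h: "incr_homeo h" and fixed: "\<forall>g\<in>G. h g = g"
  shows "invariant h (connected_component_set (- G) z)"
proof -
  have "g \<in> closed_segment z (h y) \<longleftrightarrow> g \<in> closed_segment z y" if "g \<in> G" for g y
    using incr_homeo_le_iff[OF h, of g y] incr_homeo_le_iff[OF h, of y g] fixed that
    by (auto simp: closed_segment_eq_real_ivl)
  then show ?thesis
    unfolding invariant_def mem_connected_component_set_real by blast
qed

lemma cyclic_action_component: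
  assumes "\<And>i. incr_homeo (f i)" "\<And>i. conj_to_square (f i) (f (Suc i))" "\<And>i. f (i + 4) = f i"
    and "z \<notin> {x. \<forall>i. f i x = x}"
  shows "cyclic_action f (connected_component_set (- {x. \<forall>i. f i x = x}) z)"
proof -
  let ?G = "{x. \<forall>i. f i x = x}"
  have "closed ?G"
    using closed_fixed_points[OF incr_homeo_continuous_on[OF assms(1)]]
    by (simp add: closed_INT Collect_all_eq)
  have "connected_component (- ?G) z z"
    using assms(4) by (simp add: connected_component_refl)
  show ?thesis
  proof
    show "incr_homeo (f i)" "conj_to_square (f i) (f (Suc i))" "f (i + 4) = f i" for i
      using assms by blast+
    show "is_interval (connected_component_set (- ?G) z)"
      by (simp add: is_interval_connected_1)
    show "open (connected_component_set (- ?G) z)"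
      using \<open>closed ?G\<close> by (simp add: open_connected_component open_Compl)
    show "connected_component_set (- ?G) z \<noteq> {}"
      using \<open>connected_component (- ?G) z z\<close> by blast
    show "invariant (f i) (connected_component_set (- ?G) z)" for i
      using assms(1) by (rule invariant_component_of_non_fixed) simp
  qed
qed

theorem proposition5p1:
  fixes a :: "nat \<Rightarrow> real \<Rightarrow> real"
  assumes "higman_rep a"
  shows "\<forall>i<4. a i = id"
proof -
  define f where "f i = a (i mod 4)" for i
  have rep: "C1_diffeo (a j)"
    "a j \<circ> a ((j + 1) mod 4) \<circ> inv (a j) = a ((j + 1) mod 4) \<circ> a ((j + 1) mod 4)"
    if "j < 4" for j
    using assms that unfolding higman_rep_def by blast+
  have diffeo: "C1_diffeo (f i)"
    and rel: "f i \<circ> f (Suc i) \<circ> inv (f i) = f (Suc i) \<circ> f (Suc i)" for i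
    using rep[of "i mod 4"] by (simp_all add: f_def mod_Suc_eq)
  have periodic: "f (i + 4) = f i" for i
    by (simp add: f_def)
  have incr: "incr_homeo (f i)" "C1_pos_deriv (f i)" for i
    using C1_diffeo_conj_to_square_increasing[OF diffeo diffeo rel[of "i + 3"]] periodic[of i]
    by (simp_all add: add.commute)
  have conj: "conj_to_square (f i) (f (Suc i))" for i
    using conj_to_square_of_comp[OF _ rel] diffeo by (simp add: C1_diffeo_def)
  have "\<forall>i. f i x = x" for x
  proof (rule ccontr)
    assume "\<not> (\<forall>i. f i x = x)"
    then have "cyclic_C1_action f (connected_component_set (- {x. \<forall>i. f i x = x}) x)"
      using cyclic_action_component[OF incr(1) conj periodic] incr(2)
      by (intro cyclic_C1_action.intro cyclic_C1_action_axioms.intro) auto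
    then show False
      using cyclic_C1_action.common_fixed_point connected_component_subset by fastforce
  qed
  moreover have "a i = f i" if "i < 4" for i
    using that by (simp add: f_def)
  ultimately show ?thesis
    by (simp add: fun_eq_iff)
qed

end
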